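(* Let $n>1$, let $\mathcal{X}=\{-1,1\}^n$, and let $\mathcal{P}\subseteq[0,1]$ be a Lebesgue measurable set with Lebesgue measure $\mu(\mathcal{P})>0$. Let $\mathcal{K}$ be the set of admissible controllers, i.e. maps $K:\mathcal{X}\to\mathbb{R}^n$, $X=(X_0,\dots,X_{n-1})\mapsto (K_0(X),\dots,K_{n-1}(X))$, such that for each $k$ the value $K_k(X)$ depends only on $X_0,\dots,X_{k-1}$, and $|K_k(X)|\leq 1$ for all $X,k$. For $K\in\mathcal{K}$ and $p\in[0,1]$ let \[ ELG_K(p)\doteq\frac{1}{n}\sum_{X\in\mathcal{X}}p^{n_h(X)}(1-p)^{n-n_h(X)}\sum_{k=0}^{n-1}\log\bigl(1+K_k(X)X_k\bigr), \] where $n_h(X)=\#\{i:X_i=1\}$, with conventions $\log 0=-\infty$, $0\cdot(-\infty)=0$. Let $K^*\in\mathcal{K}$ be the controller \[ K_k^*(X)=\frac{\int_{p\in\mathcal{P}}p^{q_k}(1-p)^{k-q_k}(2p-1)\,dp}{\int_{p\in\mathcal{P}}p^{q_k}(1-p)^{k-q_k}\,dp},\qquad q_k=\#\{i\in\{0,\dots,k-1\}:X_i=1\}, \] (the unique maximizer of $K\mapsto\int_{\mathcal{P}}ELG_K(p)\,dp$ over $\mathcal{K}$), and let $K_0^*$ denote the static linear controller with constant gain $K_0^*=2\bar p-1$ at every stage and every sample path, where $\bar p=\frac{1}{\mu(\mathcal{P})}\int_{\mathcal{P}}p\,dp$ (the optimal static linear controller). Then \[ \int_{p\in\mathcal{P}}ELG_{K^*}(p)\,dp\;>\;\int_{p\in\mathcal{P}}ELG_{K_0^*}(p)\,dp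 . \]
   Context: Interpretation: $n$ flips of a coin with unknown probability of heads $p\in\mathcal{P}$ and even-money payoff; $X_k=1$ is heads, $X_k=-1$ tails; the bet at stage $k$ is $K_k(X)V_k$ and wealth evolves as $V_{k+1}=(1+K_k(X)X_k)V_k$, so $ELG_K(p)=\frac1n\mathbb{E}\log(V_n/V_0)$. A static linear controller is one with $K_k(X)\equiv K_0$ constant for all $k$ and $X$. *)

theory Defs
  imports "HOL-Analysis.Analysis"
begin

definition paths :: "nat \<Rightarrow> (nat \<Rightarrow> real) set" where
  "paths n = PiE {..<n} (\<lambda>_. {-1, 1})"

definition heads :: "nat \<Rightarrow> (nat \<Rightarrow> real) \<Rightarrow> nat" where
  "heads m X = card {i. i < m \<and> X i = 1}"

definition admissible :: "nat \<Rightarrow> (nat \<Rightarrow> (nat \<Rightarrow> real) \<Rightarrow> real) \<Rightarrow> bool" where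
  "admissible n K \<longleftrightarrow>
     (\<forall>k<n. \<forall>X\<in>paths n. \<forall>Y\<in>paths n. (\<forall>i<k. X i = Y i) \<longrightarrow> K k X = K k Y) \<and>
     (\<forall>k<n. \<forall>X\<in>paths n. \<bar>K k X\<bar> \<le> 1)"

definition ELG :: "nat \<Rightarrow> (nat \<Rightarrow> (nat \<Rightarrow> real) \<Rightarrow> real) \<Rightarrow> real \<Rightarrow> real" where
  "ELG n K p = (1 / real n) *
     (\<Sum>X\<in>paths n. p ^ heads n X * (1 - p) ^ (n - heads n X) *
        (\<Sum>k<n. ln (1 + K k X * X k)))"

definition Kstar :: "real set \<Rightarrow> nat \<Rightarrow> (nat \<Rightarrow> real) \<Rightarrow> real" where
  "Kstar P k X =
     (LINT p:P|lebesgue. p ^ heads k X * (1 - p) ^ (k - heads k X) * (2 * p - 1)) /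
     (LINT p:P|lebesgue. p ^ heads k X * (1 - p) ^ (k - heads k X))"

definition pbar :: "real set \<Rightarrow> real" where
  "pbar P = (LINT p:P|lebesgue. p) / measure lebesgue P"

definition Kstatic :: "real set \<Rightarrow> nat \<Rightarrow> (nat \<Rightarrow> real) \<Rightarrow> real" where
  "Kstatic P k X = 2 * pbar P - 1"

end

theory Submission imports Defs begin

(* Integrating over P and summing out the flips after stage k turns the prior-averaged log growth
   into a sum, over stages k and histories Z of length k, of A ln (1 + K_k(Z)) + B ln (1 - K_k(Z)),
   where A and B are the P-integrals of the likelihood of Z followed by a head, resp. a tail.
   Each term is strictly concave in the gain, with unique maximiser (A - B) / (A + B) = K*_k(Z),
   the Kelly bet for the posterior. The static gain 2 pbar - 1 equals K*_0, but after a first head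
   K*_1 = 2 E[p^2] / E[p] - 1 is strictly larger than 2 E[p] - 1 by strict Cauchy-Schwarz,
   since p is not almost everywhere constant on a set of positive measure. *)

lemma finite_paths: "finite (paths n)"
  unfolding paths_def by (rule finite_PiE) auto

lemma sum_paths_Suc:
  "(\<Sum>Y\<in>paths (Suc k). G Y) = (\<Sum>X\<in>paths k. G (X(k := 1)) + G (X(k := -1)))"
proof -
  have paths_Suc: "paths (Suc k) = (\<lambda>(y, X). X(k := y)) ` ({-1, 1} \<times> paths k)"
    unfolding paths_def lessThan_Suc by (rule PiE_insert_eq)
  have "inj_on (\<lambda>(y, X). X(k := y)) ({-1, 1} \<times> paths k)"
    unfolding paths_def by (rule inj_combinator) simp
  then have "(\<Sum>Y\<in>paths (Suc k). G Y) = (\<Sum>(y, X)\<in>{-1, 1} \<times> paths k. G (X(k := y)))"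
    unfolding paths_Suc by (subst sum.reindex) (simp_all add: case_prod_unfold)
  also have "\<dots> = (\<Sum>X\<in>paths k. G (X(k := 1)) + G (X(k := -1)))"
    by (simp add: sum.cartesian_product[symmetric] sum.distrib add.commute)
  finally show ?thesis .
qed

lemma heads_le: "heads m X \<le> m"
  unfolding heads_def by (rule card_mono[of "{..<m}", simplified]) auto

lemma heads_cong: "(\<And>i. i < m \<Longrightarrow> X i = Y i) \<Longrightarrow> heads m X = heads m Y"
  unfolding heads_def by (rule arg_cong[where f = card]) auto

lemma heads_Suc: "heads (Suc m) X = heads m X + (if X m = 1 then 1 else 0)"
proof -
  have "{i. i < Suc m \<and> X i = 1} = {i. i < m \<and> X i = 1} \<union> (if X m = 1 then {m} else {})"
    by (auto simp: less_Suc_eq)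
  then show ?thesis
    unfolding heads_def by (simp add: card_insert_if)
qed

definition path_weight :: "nat \<Rightarrow> (nat \<Rightarrow> real) \<Rightarrow> real \<Rightarrow> real" where
  "path_weight m X p = p ^ heads m X * (1 - p) ^ (m - heads m X)"

lemma path_weight_0 [simp]: "path_weight 0 X p = 1"
  unfolding path_weight_def heads_def by simp

lemma path_weight_Suc_head: "path_weight (Suc k) (X(k := 1)) p = path_weight k X p * p"
  unfolding path_weight_def heads_Suc by (simp add: heads_cong[of k "X(k := 1)" X])

lemma path_weight_Suc_tail: "path_weight (Suc k) (X(k := -1)) p = path_weight k X p * (1 - p)"
proof -
  have "Suc k - heads k X = Suc (k - heads k X)"
    using heads_le[of k X] by simp
  then show ?thesis
    unfolding path_weight_def heads_Suc by (simp add: heads_cong[of k "X(k := -1)" X])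
qed

lemma sum_paths_marginal:
  assumes "m \<le> n" and F: "\<And>X Y. (\<And>i. i < m \<Longrightarrow> X i = Y i) \<Longrightarrow> F X = F Y"
  shows "(\<Sum>X\<in>paths n. path_weight n X p * F X) = (\<Sum>X\<in>paths m. path_weight m X p * F X)"
  using assms(1)
proof (induction n rule: dec_induct)
  case base
  show ?case ..
next
  case (step k)
  have "F (X(k := 1)) = F X" "F (X(k := -1)) = F X" for X
    using step.hyps(1) by (auto intro!: F)
  then have "(\<Sum>X\<in>paths (Suc k). path_weight (Suc k) X p * F X) =
      (\<Sum>X\<in>paths k. path_weight k X p * p * F X + path_weight k X p * (1 - p) * F X)"
    by (simp add: sum_paths_Suc path_weight_Suc_head path_weight_Suc_tail)
  also have "\<dots> = (\<Sum>X\<in>paths k. path_weight k X p * F X)"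
    by (simp add: algebra_simps)
  finally show ?case
    using step.IH by simp
qed

lemma sum_paths_stage:
  assumes "k < n" and c: "\<And>X Y. (\<And>i. i < k \<Longrightarrow> X i = Y i) \<Longrightarrow> c X = c Y"
  shows "(\<Sum>X\<in>paths n. path_weight n X p * g (c X) (X k)) =
    (\<Sum>Z\<in>paths k. path_weight k Z p * (p * g (c Z) 1 + (1 - p) * g (c Z) (-1)))"
proof -
  have "(\<Sum>X\<in>paths n. path_weight n X p * g (c X) (X k)) =
      (\<Sum>X\<in>paths (Suc k). path_weight (Suc k) X p * g (c X) (X k))"
  proof (rule sum_paths_marginal)
    show "Suc k \<le> n"
      using assms(1) by simp
    fix X Y :: "nat \<Rightarrow> real"
    assume XY: "\<And>i. i < Suc k \<Longrightarrow> X i = Y i"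
    then have "c X = c Y"
      by (intro c) simp
    then show "g (c X) (X k) = g (c Y) (Y k)"
      using XY[of k] by simp
  qed
  also have "\<dots> = (\<Sum>Z\<in>paths k. path_weight k Z p * (p * g (c Z) 1 + (1 - p) * g (c Z) (-1)))"
  proof -
    have "c (Z(k := y)) = c Z" for Z y
      by (rule c) simp
    then show ?thesis
      unfolding sum_paths_Suc path_weight_Suc_head path_weight_Suc_tail
      by (simp add: algebra_simps)
  qed
  finally show ?thesis .
qed

(* Unlike admissible, this constrains K k on all functions and not only on paths n:
   the stagewise formulas evaluate K k at histories in paths k. *)
definition nonanticipating :: "(nat \<Rightarrow> (nat \<Rightarrow> real) \<Rightarrow> real) \<Rightarrow> bool" where
  "nonanticipating K \<longleftrightarrow> (\<forall>k X Y. (\<forall>i<k. X i = Y i) \<longrightarrow> K k X = K k Y)"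

lemma nonanticipating_Kstar: "nonanticipating (Kstar P)"
  unfolding nonanticipating_def
proof (intro allI impI)
  fix k and X Y :: "nat \<Rightarrow> real"
  assume "\<forall>i<k. X i = Y i"
  then have "heads k X = heads k Y"
    by (intro heads_cong) simp
  then show "Kstar P k X = Kstar P k Y"
    unfolding Kstar_def by simp
qed

lemma nonanticipating_Kstatic: "nonanticipating (Kstatic P)"
  unfolding nonanticipating_def Kstatic_def by simp

lemma ELG_stagewise:
  assumes "nonanticipating K"
  shows "ELG n K p = 1 / real n * (\<Sum>k<n. \<Sum>Z\<in>paths k.
    path_weight k Z p * (p * ln (1 + K k Z) + (1 - p) * ln (1 - K k Z)))"
proof -
  have "ELG n K p = 1 / real n * (\<Sum>k<n. \<Sum>X\<in>paths n. path_weight n X p * ln (1 + K k X * X k))"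
    unfolding ELG_def path_weight_def sum_distrib_left by (rule sum.swap)
  also have "\<dots> = 1 / real n * (\<Sum>k<n. \<Sum>Z\<in>paths k.
      path_weight k Z p * (p * ln (1 + K k Z) + (1 - p) * ln (1 - K k Z)))"
  proof -
    have K: "K k X = K k Y" if "\<And>i. i < k \<Longrightarrow> X i = Y i" for k X Y
      using assms that unfolding nonanticipating_def by blast
    have "(\<Sum>X\<in>paths n. path_weight n X p * ln (1 + K k X * X k)) =
        (\<Sum>Z\<in>paths k. path_weight k Z p * (p * ln (1 + K k Z) + (1 - p) * ln (1 - K k Z)))"
      if "k < n" for k
      using sum_paths_stage[OF that K, where g = "\<lambda>a x. ln (1 + a * x)"] by simp
    then show ?thesis
      by simp
  qed
  finally show ?thesis .
qed

lemma log_utility_le_kelly: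
  fixes A B y :: real
  assumes A: "0 < A" and B: "0 < B" and y: "\<bar>y\<bar> < 1"
  defines "x \<equiv> (A - B) / (A + B)"
  shows "A * ln (1 + y) + B * ln (1 - y) \<le> A * ln (1 + x) + B * ln (1 - x)"
    and "y \<noteq> x \<Longrightarrow> A * ln (1 + y) + B * ln (1 - y) < A * ln (1 + x) + B * ln (1 - x)"
proof -
  have x_plus: "1 + x = 2 * A / (A + B)" and x_minus: "1 - x = 2 * B / (A + B)"
    using A B by (simp_all add: x_def field_simps)
  have pos: "0 < 1 + y" "0 < 1 - y" "0 < 1 + x" "0 < 1 - x"
    using y A B by (auto simp: x_plus x_minus)
  \<comment> \<open>the tangent-line bounds of the two logarithms cancel exactly at the Kelly bet x\<close>
  have cancel: "A * ((y - x) / (1 + x)) + B * ((x - y) / (1 - x)) = 0"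
    using A B by (simp add: x_plus x_minus field_simps)
  have "A * (ln (1 + y) - ln (1 + x)) + B * (ln (1 - y) - ln (1 - x))
      \<le> A * ((y - x) / (1 + x)) + B * ((x - y) / (1 - x))"
    using ln_diff_le[OF pos(1,3)] ln_diff_le[OF pos(2,4)] A B
    by (intro add_mono mult_left_mono) auto
  then show "A * ln (1 + y) + B * ln (1 - y) \<le> A * ln (1 + x) + B * ln (1 - x)"
    using cancel by (simp add: algebra_simps)
  assume "y \<noteq> x"
  then have "A * (ln (1 + y) - ln (1 + x)) + B * (ln (1 - y) - ln (1 - x))
      < A * ((y - x) / (1 + x)) + B * ((x - y) / (1 - x))"
    using ln_diff_less[OF pos(1,3)] ln_diff_less[OF pos(2,4)] A B
    by (intro add_strict_mono mult_strict_left_mono) auto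
  then show "A * ln (1 + y) + B * ln (1 - y) < A * ln (1 + x) + B * ln (1 - x)"
    using cancel by (simp add: algebra_simps)
qed

lemma set_integral_pos_AE:
  fixes g :: "'a \<Rightarrow> real"
  assumes int: "set_integrable M A g" and A: "A \<in> sets M" "emeasure M A \<noteq> 0"
    and pos: "AE x\<in>A in M. 0 < g x"
  shows "0 < (LINT x:A|M. g x)"
proof -
  let ?f = "\<lambda>x. indicator A x *\<^sub>R g x"
  have nonneg: "AE x in M. 0 \<le> ?f x"
    using pos by eventually_elim (auto split: split_indicator)
  have "(LINT x:A|M. g x) \<noteq> 0"
  proof
    assume "(LINT x:A|M. g x) = 0"
    then have "AE x in M. ?f x = 0"
      using integral_nonneg_eq_0_iff_AE[OF int[unfolded set_integrable_def] nonneg]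
      by (simp add: set_lebesgue_integral_def)
    with pos have "AE x\<in>A in M. False"
      by eventually_elim (auto split: split_indicator)
    then have "A \<in> null_sets M"
      using A(1) by (simp add: AE_iff_null_sets)
    then show False
      using A(2) by auto
  qed
  moreover have "0 \<le> (LINT x:A|M. g x)"
    unfolding set_lebesgue_integral_def using nonneg by (rule integral_nonneg_AE)
  ultimately show ?thesis by simp
qed

lemma set_integral_sum:
  fixes f :: "'i \<Rightarrow> 'a \<Rightarrow> real"
  assumes "\<And>i. i \<in> I \<Longrightarrow> set_integrable M A (f i)"
  shows "(LINT x:A|M. (\<Sum>i\<in>I. f i x)) = (\<Sum>i\<in>I. LINT x:A|M. f i x)"
  using assms unfolding set_lebesgue_integral_def set_integrable_def scaleR_sum_right
  by (rule Bochner_Integration.integral_sum)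

locale coin_prior =
  fixes P :: "real set"
  assumes P_sets: "P \<in> sets lebesgue"
    and P_subset: "P \<subseteq> {0..1}"
    and P_pos: "emeasure lebesgue P > 0"
begin

lemma set_integrable_P:
  fixes g :: "real \<Rightarrow> real"
  assumes "continuous_on {0..1} g"
  shows "set_integrable lebesgue P g"
  using absolutely_integrable_continuous_real[OF assms] P_sets P_subset
  by (rule set_integrable_subset)

lemma set_integral_P_pos:
  fixes g :: "real \<Rightarrow> real"
  assumes "continuous_on {0..1} g" "finite F" "\<And>x. x \<in> P - F \<Longrightarrow> 0 < g x"
  shows "0 < (LINT x:P|lebesgue. g x)"
proof (rule set_integral_pos_AE[OF set_integrable_P[OF assms(1)] P_sets])
  show "emeasure lebesgue P \<noteq> 0" using P_pos by simp
  have "F \<in> null_sets lebesgue"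
    by (rule null_sets_completionI[OF finite_imp_null_set_lborel[OF assms(2)]])
  then show "AE x\<in>P in lebesgue. 0 < g x"
    by (rule AE_I') (use assms(3) in auto)
qed

lemma emeasure_P_finite: "emeasure lebesgue P \<noteq> \<infinity>"
proof -
  have "emeasure lebesgue P \<le> emeasure lebesgue {0..1::real}"
    using P_sets P_subset by (intro emeasure_mono) auto
  then show ?thesis by (auto simp: top_unique)
qed

lemma set_integral_P_const: "(LINT x:P|lebesgue. c) = c * measure lebesgue P"
  using set_integral_const[OF P_sets emeasure_P_finite, of c] by (simp add: mult.commute)

definition heads_weight :: "nat \<Rightarrow> (nat \<Rightarrow> real) \<Rightarrow> real" where
  "heads_weight k Z = (LINT p:P|lebesgue. path_weight k Z p * p)"

definition tails_weight :: "nat \<Rightarrow> (nat \<Rightarrow> real) \<Rightarrow> real" where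
  "tails_weight k Z = (LINT p:P|lebesgue. path_weight k Z p * (1 - p))"

lemma heads_weight_pos: "0 < heads_weight k Z"
  unfolding heads_weight_def path_weight_def
  by (rule set_integral_P_pos[of _ "{0, 1}"]) (use P_subset in \<open>auto intro!: continuous_intros\<close>)

lemma tails_weight_pos: "0 < tails_weight k Z"
  unfolding tails_weight_def path_weight_def
  by (rule set_integral_P_pos[of _ "{0, 1}"]) (use P_subset in \<open>auto intro!: continuous_intros\<close>)

lemma Kstar_eq: "Kstar P k Z = (heads_weight k Z - tails_weight k Z) / (heads_weight k Z + tails_weight k Z)"
proof -
  have int: "set_integrable lebesgue P (\<lambda>p. path_weight k Z p * p)"
    "set_integrable lebesgue P (\<lambda>p. path_weight k Z p * (1 - p))"
    unfolding path_weight_def by (auto intro!: set_integrable_P continuous_intros)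
  have "(LINT p:P|lebesgue. p ^ heads k Z * (1 - p) ^ (k - heads k Z) * (2 * p - 1)) =
      (LINT p:P|lebesgue. path_weight k Z p * p - path_weight k Z p * (1 - p))"
    unfolding path_weight_def by (simp add: algebra_simps)
  moreover have "(LINT p:P|lebesgue. p ^ heads k Z * (1 - p) ^ (k - heads k Z)) =
      (LINT p:P|lebesgue. path_weight k Z p * p + path_weight k Z p * (1 - p))"
    unfolding path_weight_def by (simp add: algebra_simps)
  ultimately show ?thesis
    unfolding Kstar_def heads_weight_def tails_weight_def using int by simp
qed

lemma abs_Kstar_less_1: "\<bar>Kstar P k Z\<bar> < 1"
  using heads_weight_pos[of k Z] tails_weight_pos[of k Z]
  by (simp add: Kstar_eq abs_less_iff field_simps)

definition stage_utility :: "nat \<Rightarrow> (nat \<Rightarrow> real) \<Rightarrow> real \<Rightarrow> real" where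
  "stage_utility k Z x = heads_weight k Z * ln (1 + x) + tails_weight k Z * ln (1 - x)"

lemma stage_utility_le_Kstar: "\<bar>x\<bar> < 1 \<Longrightarrow> stage_utility k Z x \<le> stage_utility k Z (Kstar P k Z)"
  unfolding stage_utility_def Kstar_eq
  by (rule log_utility_le_kelly(1)[OF heads_weight_pos tails_weight_pos])

lemma stage_utility_less_Kstar:
  "\<bar>x\<bar> < 1 \<Longrightarrow> x \<noteq> Kstar P k Z \<Longrightarrow> stage_utility k Z x < stage_utility k Z (Kstar P k Z)"
  unfolding stage_utility_def Kstar_eq
  by (rule log_utility_le_kelly(2)[OF heads_weight_pos tails_weight_pos])

lemma integral_ELG_stagewise:
  assumes "nonanticipating K"
  shows "(LINT p:P|lebesgue. ELG n K p) = 1 / real n * (\<Sum>k<n. \<Sum>Z\<in>paths k. stage_utility k Z (K k Z))"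
proof -
  have int: "set_integrable lebesgue P (\<lambda>p. path_weight k Z p * (p * c + (1 - p) * d))" for k Z c d
    unfolding path_weight_def by (auto intro!: set_integrable_P continuous_intros)
  have int_sum: "set_integrable lebesgue P (\<lambda>p. \<Sum>Z\<in>paths k. path_weight k Z p * (p * a Z + (1 - p) * b Z))"
    for k Z and a b :: "(nat \<Rightarrow> real) \<Rightarrow> real"
    unfolding path_weight_def by (auto intro!: set_integrable_P continuous_intros)
  have "(LINT p:P|lebesgue. path_weight k Z p * (p * a + (1 - p) * b)) =
      heads_weight k Z * a + tails_weight k Z * b" for k Z a b
  proof -
    have "(LINT p:P|lebesgue. path_weight k Z p * (p * a + (1 - p) * b)) =
        (LINT p:P|lebesgue. path_weight k Z p * p * a + path_weight k Z p * (1 - p) * b)"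
      by (simp add: algebra_simps)
    also have "\<dots> = heads_weight k Z * a + tails_weight k Z * b"
      unfolding heads_weight_def tails_weight_def path_weight_def
      by (subst set_integral_add(2)) (auto intro!: set_integrable_P continuous_intros)
    finally show ?thesis .
  qed
  then show ?thesis
    unfolding ELG_stagewise[OF assms] stage_utility_def
    using int int_sum by (simp add: set_integral_sum)
qed

lemma heads_weight_0: "heads_weight 0 Z = (LINT p:P|lebesgue. p)"
  unfolding heads_weight_def by simp

lemma tails_weight_0: "tails_weight 0 Z = measure lebesgue P - (LINT p:P|lebesgue. p)"
  unfolding tails_weight_def path_weight_0 mult_1
  by (subst set_integral_diff(2)) (auto intro!: set_integrable_P continuous_intros simp: set_integral_P_const)

lemma measure_P_pos: "0 < measure lebesgue P"
  using heads_weight_pos[of 0 undefined] tails_weight_pos[of 0 undefined]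
  by (simp add: heads_weight_0 tails_weight_0)

lemma Kstatic_eq_Kstar_0: "Kstatic P k X = Kstar P 0 Z"
  using measure_P_pos
  by (simp add: Kstatic_def pbar_def Kstar_eq heads_weight_0 tails_weight_0 field_simps)

lemma first_moment_squared_less: "(LINT p:P|lebesgue. p)\<^sup>2 < measure lebesgue P * (LINT p:P|lebesgue. p\<^sup>2)"
proof -
  define \<mu> S1 S2 where "\<mu> = measure lebesgue P"
    and "S1 = (LINT p:P|lebesgue. p)" and "S2 = (LINT p:P|lebesgue. p\<^sup>2)"
  define m where "m = S1 / \<mu>"
  have "0 < (LINT p:P|lebesgue. (p - m)\<^sup>2)"
    by (rule set_integral_P_pos[of _ "{m}"]) (auto intro!: continuous_intros)
  also have "(LINT p:P|lebesgue. (p - m)\<^sup>2) = (LINT p:P|lebesgue. p\<^sup>2 - 2 * m * p + m\<^sup>2)"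
    by (simp add: power2_diff algebra_simps)
  also have "\<dots> = S2 - 2 * m * S1 + m\<^sup>2 * \<mu>"
    unfolding S1_def S2_def \<mu>_def
    by (subst set_integral_add(2) set_integral_diff(2), (auto intro!: set_integrable_P continuous_intros)[2])+
      (simp add: set_integral_P_const)
  finally have "0 < \<mu> * (S2 - 2 * m * S1 + m\<^sup>2 * \<mu>)"
    using measure_P_pos by (simp add: \<mu>_def)
  also have "\<mu> * (S2 - 2 * m * S1 + m\<^sup>2 * \<mu>) = \<mu> * S2 - S1\<^sup>2"
    using measure_P_pos by (simp add: m_def \<mu>_def field_simps power2_eq_square)
  finally show ?thesis
    by (simp add: S1_def S2_def \<mu>_def)
qed

lemma Kstar_0_less_Kstar_1:
  assumes "heads 1 Z = 1"
  shows "Kstar P 0 Z < Kstar P 1 Z"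
proof -
  have weight: "path_weight 1 Z p = p" for p
    using assms by (simp add: path_weight_def)
  have heads_1: "heads_weight 1 Z = (LINT p:P|lebesgue. p\<^sup>2)"
    unfolding heads_weight_def weight by (simp add: power2_eq_square)
  have tails_1: "tails_weight 1 Z = (LINT p:P|lebesgue. p) - (LINT p:P|lebesgue. p\<^sup>2)"
  proof -
    have "tails_weight 1 Z = (LINT p:P|lebesgue. p - p\<^sup>2)"
      unfolding tails_weight_def weight by (simp add: algebra_simps power2_eq_square)
    also have "\<dots> = (LINT p:P|lebesgue. p) - (LINT p:P|lebesgue. p\<^sup>2)"
      by (rule set_integral_diff(2)) (auto intro!: set_integrable_P continuous_intros)
    finally show ?thesis .
  qed
  have "0 < (LINT p:P|lebesgue. p)"
    using heads_weight_pos[of 0 Z] by (simp add: heads_weight_0)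
  with measure_P_pos first_moment_squared_less show ?thesis
    unfolding Kstar_eq heads_1 tails_1 heads_weight_0 tails_weight_0
    by (simp add: field_simps power2_eq_square)
qed

end

theorem mainTheorem4:
  fixes n :: nat and P :: "real set"
  assumes "n > 1"
    and "P \<in> sets lebesgue"
    and "P \<subseteq> {0..1}"
    and "emeasure lebesgue P > 0"
  shows "(LINT p:P|lebesgue. ELG n (Kstar P) p) > (LINT p:P|lebesgue. ELG n (Kstatic P) p)"
proof -
  interpret coin_prior P
    using assms(2-4) by unfold_locales
  define H :: "nat \<Rightarrow> real" where "H = (\<lambda>_. undefined)(0 := 1)"
  have H: "H \<in> paths 1" "heads 1 H = 1"
    unfolding H_def paths_def heads_def by (auto simp: PiE_iff extensional_def)
  have le: "stage_utility k Z (Kstatic P k Z) \<le> stage_utility k Z (Kstar P k Z)" for k Z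
    using stage_utility_le_Kstar abs_Kstar_less_1 Kstatic_eq_Kstar_0 by metis
  have "stage_utility 1 H (Kstatic P 1 H) < stage_utility 1 H (Kstar P 1 H)"
    using stage_utility_less_Kstar abs_Kstar_less_1 Kstatic_eq_Kstar_0 Kstar_0_less_Kstar_1[OF H(2)]
    by (metis less_irrefl)
  then have "(\<Sum>Z\<in>paths 1. stage_utility 1 Z (Kstatic P 1 Z)) < (\<Sum>Z\<in>paths 1. stage_utility 1 Z (Kstar P 1 Z))"
    using H(1) le finite_paths by (intro sum_strict_mono_ex1) auto
  then have "(\<Sum>k<n. \<Sum>Z\<in>paths k. stage_utility k Z (Kstatic P k Z))
      < (\<Sum>k<n. \<Sum>Z\<in>paths k. stage_utility k Z (Kstar P k Z))"
    using \<open>n > 1\<close> le by (intro sum_strict_mono_ex1) (auto intro: sum_mono)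
  then show ?thesis
    using \<open>n > 1\<close>
    by (simp add: integral_ELG_stagewise nonanticipating_Kstar nonanticipating_Kstatic divide_strict_right_mono)
qed

end
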